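(* Let $G$ be a finite simple graph with a normal spanning tree $T$ rooted at some vertex $r$, such that $G$ has no secant edges with respect to $T$. If $T$ is a star$^0$-like tree, then $\chi(G)\le 4$.
   Context: For a tree $T$ rooted at $r$, write $y\le_T x$ if $y$ lies on the $rx$-path of $T$. $T$ is normal in $G$ if for every edge $xy$ of $G$, $x\le_T y$ or $y\le_T x$. Two edges $e,e'$ of $G$ are secant with respect to $T$ if there is a path $P=x_1\dots x_n$ in $T$ with $x_1=r$ containing the ends of $e,e'$ such that, with respect to the enumeration $x_1\dots x_n$, both are jumps (an edge $x_ix_j$ with $|i-j|>1$) and, writing them $x_lx_m$, $x_px_q$ with $l<m$, $p<q$, we have $l<p<m<q$ or $p<l<q<m$. A star$^0$-like tree is a tree having exactly one vertex of degree strictly greater than $2$. *)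

theory Defs
  imports Main
begin

definition simple_graph :: "'a set \<Rightarrow> 'a set set \<Rightarrow> bool" where
  "simple_graph V E \<longleftrightarrow> (\<forall>e\<in>E. \<exists>u v. e = {u, v} \<and> u \<in> V \<and> v \<in> V \<and> u \<noteq> v)"

definition is_path :: "'a set \<Rightarrow> 'a set set \<Rightarrow> 'a list \<Rightarrow> bool" where
  "is_path V E P \<longleftrightarrow> P \<noteq> [] \<and> distinct P \<and> set P \<subseteq> V \<and>
     (\<forall>i. Suc i < length P \<longrightarrow> {P ! i, P ! Suc i} \<in> E)"

definition connected_graph :: "'a set \<Rightarrow> 'a set set \<Rightarrow> bool" where
  "connected_graph V E \<longleftrightarrow>
     (\<forall>u\<in>V. \<forall>v\<in>V. \<exists>P. is_path V E P \<and> hd P = u \<and> last P = v)"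

definition acyclic_graph :: "'a set \<Rightarrow> 'a set set \<Rightarrow> bool" where
  "acyclic_graph V E \<longleftrightarrow>
     \<not> (\<exists>C. 3 \<le> length C \<and> is_path V E C \<and> {last C, hd C} \<in> E)"

definition is_tree :: "'a set \<Rightarrow> 'a set set \<Rightarrow> bool" where
  "is_tree V E \<longleftrightarrow> simple_graph V E \<and> V \<noteq> {} \<and> connected_graph V E \<and> acyclic_graph V E"

definition spanning_tree :: "'a set \<Rightarrow> 'a set set \<Rightarrow> 'a set set \<Rightarrow> bool" where
  "spanning_tree V E TE \<longleftrightarrow> TE \<subseteq> E \<and> is_tree V TE"

definition tree_le :: "'a set \<Rightarrow> 'a set set \<Rightarrow> 'a \<Rightarrow> 'a \<Rightarrow> 'a \<Rightarrow> bool" where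
  "tree_le V TE r y x \<longleftrightarrow> (\<exists>P. is_path V TE P \<and> hd P = r \<and> last P = x \<and> y \<in> set P)"

definition normal_tree :: "'a set \<Rightarrow> 'a set set \<Rightarrow> 'a set set \<Rightarrow> 'a \<Rightarrow> bool" where
  "normal_tree V E TE r \<longleftrightarrow>
     (\<forall>x y. {x, y} \<in> E \<longrightarrow> tree_le V TE r x y \<or> tree_le V TE r y x)"

definition secant :: "'a set \<Rightarrow> 'a set set \<Rightarrow> 'a \<Rightarrow> 'a set \<Rightarrow> 'a set \<Rightarrow> bool" where
  "secant V TE r e e' \<longleftrightarrow>
     (\<exists>P l m p q. is_path V TE P \<and> hd P = r \<and>
        l < m \<and> p < q \<and> m < length P \<and> q < length P \<and>
        e = {P ! l, P ! m} \<and> e' = {P ! p, P ! q} \<and>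
        1 < m - l \<and> 1 < q - p \<and>
        ((l < p \<and> p < m \<and> m < q) \<or> (p < l \<and> l < q \<and> q < m)))"

definition degree :: "'a set set \<Rightarrow> 'a \<Rightarrow> nat" where
  "degree E v = card {w. {v, w} \<in> E}"

definition star0_like :: "'a set \<Rightarrow> 'a set set \<Rightarrow> bool" where
  "star0_like V TE \<longleftrightarrow> (\<exists>!v. v \<in> V \<and> 2 < degree TE v)"

definition colourable :: "'a set \<Rightarrow> 'a set set \<Rightarrow> nat \<Rightarrow> bool" where
  "colourable V E k \<longleftrightarrow>
     (\<exists>c :: 'a \<Rightarrow> nat. (\<forall>v\<in>V. c v < k) \<and> (\<forall>u v. {u, v} \<in> E \<longrightarrow> c u \<noteq> c v))"

end

theory Submission
  imports Defs
begin

text \<open>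
  Let c be the unique vertex of T of degree at least 3 and S the path of T from r to c. The
  vertices outside S form paths (branches) hanging off S, and normality makes every edge of G
  join two vertices comparable in the tree order: edges leaving S go upwards and no edge joins two
  branches. Along a root path, the absence of secant edges says that the edges, ordered by depth,
  do not cross, and an ordered graph without crossings has a vertex of degree at most 2, hence is
  3-colourable. We 3-colour S with all of V - S contracted to a single vertex, and every branch
  with S contracted to a single vertex. Normalising the colours of the contracted vertices and
  shifting the branch colours by one puts the vertices of S with neighbours outside S into colours
  0 and 1 and their neighbours outside S into colours 2 and 3.
\<close>

section \<open>Ordered graphs without crossing edges\<close>

definition crossing_free :: "'b set \<Rightarrow> ('b \<Rightarrow> 'c::linorder) \<Rightarrow> ('b \<Rightarrow> 'b \<Rightarrow> bool) \<Rightarrow> bool" where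
  "crossing_free X pos adj \<longleftrightarrow>
     (\<forall>a\<in>X. \<forall>b\<in>X. \<forall>c\<in>X. \<forall>d\<in>X.
        pos a < pos b \<longrightarrow> pos b < pos c \<longrightarrow> pos c < pos d \<longrightarrow> \<not> (adj a c \<and> adj b d))"

definition proper_colouring :: "'b set \<Rightarrow> ('b \<Rightarrow> 'b \<Rightarrow> bool) \<Rightarrow> nat \<Rightarrow> ('b \<Rightarrow> nat) \<Rightarrow> bool" where
  "proper_colouring X adj k col \<longleftrightarrow>
     (\<forall>v\<in>X. col v < k) \<and> (\<forall>u\<in>X. \<forall>v\<in>X. adj u v \<longrightarrow> col u \<noteq> col v)"

lemma crossing_freeD:
  "crossing_free X pos adj \<Longrightarrow> a \<in> X \<Longrightarrow> b \<in> X \<Longrightarrow> c \<in> X \<Longrightarrow> d \<in> X \<Longrightarrow>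
   pos a < pos b \<Longrightarrow> pos b < pos c \<Longrightarrow> pos c < pos d \<Longrightarrow> adj a c \<Longrightarrow> adj b d \<Longrightarrow> False"
  unfolding crossing_free_def by blast

lemma proper_colouringD:
  assumes "proper_colouring X adj k col"
  shows "v \<in> X \<Longrightarrow> col v < k" and "u \<in> X \<Longrightarrow> v \<in> X \<Longrightarrow> adj u v \<Longrightarrow> col u \<noteq> col v"
  using assms unfolding proper_colouring_def by blast+

lemma crossing_free_subset: "crossing_free X pos adj \<Longrightarrow> Y \<subseteq> X \<Longrightarrow> crossing_free Y pos adj"
  unfolding crossing_free_def by blast

definition strictly_between :: "'b set \<Rightarrow> ('b \<Rightarrow> 'c::linorder) \<Rightarrow> 'b \<Rightarrow> 'b \<Rightarrow> 'b set" where
  "strictly_between X pos a b = {x \<in> X. pos a < pos x \<and> pos x < pos b}"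

lemma at_most_one_right_neighbour:
  fixes pos :: "'b \<Rightarrow> 'c::linorder"
  assumes "inj_on pos X"
    and "\<And>u w. u \<in> X \<Longrightarrow> w \<in> X \<Longrightarrow> adj v w \<Longrightarrow> pos v < pos u \<Longrightarrow> pos u < pos w \<Longrightarrow> False"
  shows "\<exists>p. \<forall>u\<in>X. adj v u \<longrightarrow> pos v < pos u \<longrightarrow> u = p"
proof (cases "\<exists>p\<in>X. adj v p \<and> pos v < pos p")
  case True
  then obtain p where "p \<in> X" "adj v p" "pos v < pos p" by blast
  then have "u = p" if "u \<in> X" "adj v u" "pos v < pos u" for u
    using assms that by (metis inj_onD linorder_neqE)
  then show ?thesis by blast
qed auto

lemma low_degree_inside_innermost_edge:
  fixes pos :: "'b \<Rightarrow> 'c::linorder"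
  assumes fin: "finite X" and inj: "inj_on pos X" and irr: "irreflp adj" and sym: "symp adj"
    and cf: "crossing_free X pos adj"
    and aX: "a \<in> X" and bX: "b \<in> X" and adj_ab: "adj a b"
    and c: "c \<in> strictly_between X pos a b"
    and c_first: "\<And>y. y \<in> strictly_between X pos a b \<Longrightarrow> pos c \<le> pos y"
    and innermost: "\<And>u w. u \<in> X \<Longrightarrow> w \<in> X \<Longrightarrow> adj u w \<Longrightarrow> pos u < pos w \<Longrightarrow>
      strictly_between X pos u w \<noteq> {} \<Longrightarrow>
      card (strictly_between X pos a b) \<le> card (strictly_between X pos u w)"
  shows "\<exists>p q. \<forall>u\<in>X. adj c u \<longrightarrow> u = p \<or> u = q"
proof -
  have cX: "c \<in> X" and ac: "pos a < pos c" and cb: "pos c < pos b"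
    using c unfolding strictly_between_def by auto
  have left: "u = a" if "u \<in> X" "adj c u" "pos u < pos c" for u
  proof -
    have "\<not> pos u < pos a"
      using crossing_freeD[OF cf that(1) aX cX bX _ ac cb] sympD[OF sym that(2)] adj_ab by blast
    moreover have "\<not> pos a < pos u"
      using c_first[of u] that cb unfolding strictly_between_def by fastforce
    ultimately show "u = a" using inj aX that(1) by (metis inj_onD linorder_neqE)
  qed
  have "\<exists>p. \<forall>u\<in>X. adj c u \<longrightarrow> pos c < pos u \<longrightarrow> u = p"
  proof (rule at_most_one_right_neighbour[OF inj])
    fix u w assume uX: "u \<in> X" and wX: "w \<in> X" and cw: "adj c w"
      and cu: "pos c < pos u" and uw: "pos u < pos w"
    show False
    proof (cases "pos b < pos w")
      case True
      then show False using crossing_freeD[OF cf aX cX bX wX ac cb _ adj_ab cw] by blast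
    next
      case False
      then have sub: "strictly_between X pos c w \<subseteq> strictly_between X pos a b - {c}"
        using ac unfolding strictly_between_def by auto
      have "u \<in> strictly_between X pos c w" using uX cu uw unfolding strictly_between_def by simp
      then have "card (strictly_between X pos a b) \<le> card (strictly_between X pos c w)"
        using innermost[OF cX wX cw] cu uw by fastforce
      also have "\<dots> < card (strictly_between X pos a b)"
        using card_mono[OF _ sub] card_Diff1_less[OF _ c] fin
        unfolding strictly_between_def by fastforce
      finally show False by simp
    qed
  qed
  then obtain p where p: "\<And>u. u \<in> X \<Longrightarrow> adj c u \<Longrightarrow> pos c < pos u \<Longrightarrow> u = p" by blast
  have "u = a \<or> u = p" if "u \<in> X" "adj c u" for u
  proof -
    have "u \<noteq> c" using irreflpD[OF irr] that(2) by blast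
    then have "pos u \<noteq> pos c" using inj_onD[OF inj _ that(1) cX] by blast
    then show ?thesis using left[OF that] p[OF that] linorder_neqE by blast
  qed
  then show ?thesis by blast
qed

lemma crossing_free_low_degree:
  fixes pos :: "'b \<Rightarrow> 'c::linorder"
  assumes fin: "finite X" and ne: "X \<noteq> {}" and inj: "inj_on pos X"
    and irr: "irreflp adj" and sym: "symp adj" and cf: "crossing_free X pos adj"
  shows "\<exists>v\<in>X. \<exists>p q. \<forall>u\<in>X. adj v u \<longrightarrow> u = p \<or> u = q"
proof -
  define L where "L = {(a, b) \<in> X \<times> X. adj a b \<and> pos a < pos b \<and> strictly_between X pos a b \<noteq> {}}"
  show ?thesis
  proof (cases "L = {}")
    case False
    have "finite L" unfolding L_def using fin by (auto intro: finite_subset)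
    then obtain a b where ab: "(a, b) \<in> L"
      and ab_min: "\<And>a' b'. (a', b') \<in> L \<Longrightarrow>
        card (strictly_between X pos a b) \<le> card (strictly_between X pos a' b')"
      using arg_min_if_finite[OF _ False, of "\<lambda>(a, b). card (strictly_between X pos a b)"]
      by (metis (no_types, lifting) case_prod_conv not_le surj_pair)
    have "finite (strictly_between X pos a b)" and "strictly_between X pos a b \<noteq> {}"
      using ab fin unfolding L_def strictly_between_def by auto
    then obtain c where c: "c \<in> strictly_between X pos a b"
      and c_first: "\<And>y. y \<in> strictly_between X pos a b \<Longrightarrow> pos c \<le> pos y"
      using arg_min_if_finite[of _ pos] by (metis not_le)
    have "\<exists>p q. \<forall>u\<in>X. adj c u \<longrightarrow> u = p \<or> u = q"
      using ab ab_min unfolding L_def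
      by (intro low_degree_inside_innermost_edge[OF fin inj irr sym cf _ _ _ c c_first]) auto
    moreover have "c \<in> X" using c unfolding strictly_between_def by simp
    ultimately show ?thesis by blast
  next
    case True
    obtain x where xX: "x \<in> X" and x_first: "\<And>y. y \<in> X \<Longrightarrow> pos x \<le> pos y"
      using arg_min_if_finite[OF fin ne, of pos] by (metis not_le)
    have "\<exists>p. \<forall>u\<in>X. adj x u \<longrightarrow> pos x < pos u \<longrightarrow> u = p"
    proof (rule at_most_one_right_neighbour[OF inj])
      fix u w assume "u \<in> X" "w \<in> X" "adj x w" "pos x < pos u" "pos u < pos w"
      then have "(x, w) \<in> L" using xX unfolding L_def strictly_between_def by auto
      then show False using True by blast
    qed
    then obtain p where p: "\<And>u. u \<in> X \<Longrightarrow> adj x u \<Longrightarrow> pos x < pos u \<Longrightarrow> u = p" by blast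
    have "u = p" if "u \<in> X" "adj x u" for u
    proof -
      have "u \<noteq> x" using irreflpD[OF irr] that(2) by blast
      then have "pos u \<noteq> pos x" using inj_onD[OF inj _ that(1) xX] by blast
      then show ?thesis using p[OF that] x_first[OF that(1)] le_neq_trans by metis
    qed
    then show ?thesis using xX by blast
  qed
qed

lemma crossing_free_3_colouring:
  fixes pos :: "'b \<Rightarrow> 'c::linorder"
  assumes "finite X" and "inj_on pos X" and "irreflp adj" and "symp adj"
    and "crossing_free X pos adj"
  shows "\<exists>col. proper_colouring X adj 3 col"
  using assms(1)
proof (induction X rule: finite_remove_induct)
  case empty
  show ?case unfolding proper_colouring_def by simp
next
  case (remove Y)
  have "inj_on pos Y" and "crossing_free Y pos adj"
    using remove.hyps(3) assms(2,5) by (auto intro: inj_on_subset crossing_free_subset)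
  then obtain v p q where v: "v \<in> Y" and nbrs: "\<And>u. u \<in> Y \<Longrightarrow> adj v u \<Longrightarrow> u = p \<or> u = q"
    using crossing_free_low_degree[OF remove.hyps(1,2) _ assms(3,4)] by blast
  obtain col where col: "proper_colouring (Y - {v}) adj 3 col"
    using remove.IH[OF v] by blast
  have "\<exists>k::nat. k < 3 \<and> k \<noteq> col p \<and> k \<noteq> col q" by presburger
  then obtain k :: nat where k: "k < 3" "k \<noteq> col p" "k \<noteq> col q" by blast
  have "proper_colouring Y adj 3 (col(v := k))"
    using col k nbrs v irreflpD[OF assms(3)] sympD[OF assms(4)]
    unfolding proper_colouring_def by (metis Diff_iff fun_upd_apply singletonD)
  then show ?case by blast
qed

lemma proper_colouring_recolour:
  assumes "proper_colouring X adj k col" and "z \<in> X" and "j < k"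
  shows "\<exists>col'. proper_colouring X adj k col' \<and> col' z = j"
proof -
  define swap where "swap c = (if c = col z then j else if c = j then col z else c)" for c
  have "inj swap" unfolding swap_def inj_def by auto
  moreover have "swap c < k" if "c < k" for c
    using that assms unfolding swap_def proper_colouring_def by auto
  ultimately have "proper_colouring X adj k (swap \<circ> col)"
    using assms(1) unfolding proper_colouring_def by (simp add: inj_eq)
  moreover have "(swap \<circ> col) z = j" unfolding swap_def by simp
  ultimately show ?thesis by blast
qed

section \<open>Paths in acyclic graphs\<close>

lemma is_path_iff_successively:
  "is_path V E P \<longleftrightarrow> P \<noteq> [] \<and> distinct P \<and> set P \<subseteq> V \<and> successively (\<lambda>x y. {x, y} \<in> E) P"
  by (simp add: is_path_def successively_conv_nth)

lemma successively_take: "successively R xs \<Longrightarrow> successively R (take n xs)"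
  by (metis append_take_drop_id successively_append_iff)

lemma is_path_take: "is_path V E P \<Longrightarrow> 0 < n \<Longrightarrow> is_path V E (take n P)"
  unfolding is_path_iff_successively
  by (auto simp: successively_take dest: in_set_takeD)

lemma is_path_tl: "is_path V E (a # P) \<Longrightarrow> P \<noteq> [] \<Longrightarrow> is_path V E P"
  unfolding is_path_iff_successively by (auto simp: successively_Cons)

lemma cycle_from_meeting_paths:
  assumes pathP: "is_path V E (a # P)" and pathQ: "is_path V E (a # Q)"
    and i: "i < length P" and j: "j < length Q" and meet: "Q ! j = P ! i"
    and disjoint: "set (take (Suc i) P) \<inter> set (take j Q) = {}" and "i \<noteq> 0 \<or> j \<noteq> 0"
  shows "\<not> acyclic_graph V E"
proof -
  have dP: "distinct (a # P)" and dQ: "distinct (a # Q)"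
    and sP: "successively (\<lambda>x y. {x, y} \<in> E) (a # P)" and sQ: "successively (\<lambda>x y. {x, y} \<in> E) (a # Q)"
    and VP: "set (a # P) \<subseteq> V" and VQ: "set (a # Q) \<subseteq> V"
    using pathP pathQ unfolding is_path_iff_successively by auto
  define C where "C = (a # take (Suc i) P) @ rev (take j Q)"
  have last_front: "last (a # take (Suc i) P) = P ! i"
    using i by (simp add: take_Suc_conv_app_nth)
  have "successively (\<lambda>x y. {x, y} \<in> E) C"
  proof -
    have "successively (\<lambda>x y. {x, y} \<in> E) (a # take (Suc i) P)"
      using successively_take[OF sP, of "Suc (Suc i)"] by simp
    moreover have "successively (\<lambda>x y. {x, y} \<in> E) (rev (take j Q))"
    proof -
      have "successively (\<lambda>x y. {x, y} \<in> E) Q" using sQ by (cases Q) (auto simp: successively_Cons)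
      then show ?thesis by (simp add: successively_take insert_commute)
    qed
    moreover have "{P ! i, hd (rev (take j Q))} \<in> E" if "0 < j"
    proof -
      have "hd (rev (take j Q)) = Q ! (j - 1)"
        using that j take_Suc_conv_app_nth[of "j - 1" Q] by (simp add: hd_rev)
      then show ?thesis using successively_nth[OF sQ, of j] that j meet by (simp add: insert_commute)
    qed
    ultimately show ?thesis
      unfolding C_def successively_append_iff using last_front by auto
  qed
  moreover have "distinct C"
    unfolding C_def using dP dQ disjoint by (auto dest: in_set_takeD simp: distinct_take)
  moreover have "set C \<subseteq> V" unfolding C_def using VP VQ by (auto dest: in_set_takeD)
  moreover have "3 \<le> length C" unfolding C_def using i j \<open>i \<noteq> 0 \<or> j \<noteq> 0\<close> by auto
  moreover have "last C = hd Q"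
  proof (cases "j = 0")
    case True
    then show ?thesis using last_front j meet unfolding C_def by (simp add: hd_conv_nth)
  next
    case False
    then have "take j Q \<noteq> []" using j by (cases Q) auto
    then show ?thesis using False unfolding C_def by (simp add: last_rev hd_take)
  qed
  moreover have "hd C = a" unfolding C_def by simp
  moreover have "{hd Q, a} \<in> E" using sQ j by (cases Q) (auto simp: insert_commute)
  ultimately show ?thesis
    unfolding acyclic_graph_def is_path_iff_successively by auto
qed

lemma acyclic_paths_disjoint:
  assumes acyc: "acyclic_graph V E" and pathP: "is_path V E (a # P)" and pathQ: "is_path V E (a # Q)"
    and "P \<noteq> []" and "Q \<noteq> []" and hd_ne: "hd P \<noteq> hd Q"
  shows "set P \<inter> set Q = {}"
proof (rule ccontr)
  assume "set P \<inter> set Q \<noteq> {}"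
  then obtain i0 where "i0 < length P" "P ! i0 \<in> set Q" by (metis disjoint_iff in_set_conv_nth)
  then obtain i where i: "i < length P" "P ! i \<in> set Q"
    and i_least: "\<And>k. k < length P \<Longrightarrow> P ! k \<in> set Q \<Longrightarrow> i \<le> k"
    using ex_has_least_nat[of "\<lambda>k. k < length P \<and> P ! k \<in> set Q" i0 id] by auto
  obtain j where j: "j < length Q" "Q ! j = P ! i" by (metis i(2) in_set_conv_nth)
  have "x \<notin> set (take j Q)" if "x \<in> set (take (Suc i) P)" for x
  proof
    assume "x \<in> set (take j Q)"
    then obtain m where m: "m < j" "Q ! m = x" by (auto simp: in_set_conv_nth)
    obtain k where k: "k \<le> i" "k < length P" "P ! k = x"
      using \<open>x \<in> set (take (Suc i) P)\<close> by (auto simp: in_set_conv_nth less_Suc_eq_le)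
    have "i \<le> k" using i_least k m j by (metis in_set_conv_nth order.strict_trans)
    then have "Q ! m = Q ! j" using k m j by simp
    moreover have "distinct Q" using pathQ unfolding is_path_def by simp
    ultimately show False using m j nth_eq_iff_index_eq[of Q m j] by simp
  qed
  moreover have "i \<noteq> 0 \<or> j \<noteq> 0" using hd_ne j \<open>P \<noteq> []\<close> \<open>Q \<noteq> []\<close> by (metis hd_conv_nth)
  ultimately show False
    using cycle_from_meeting_paths[OF pathP pathQ i(1) j] acyc by blast
qed

lemma acyclic_path_unique:
  assumes "acyclic_graph V E"
  shows "is_path V E P \<Longrightarrow> is_path V E Q \<Longrightarrow> hd P = hd Q \<Longrightarrow> last P = last Q \<Longrightarrow> P = Q"
proof (induction P arbitrary: Q)
  case Nil
  then show ?case by (simp add: is_path_def)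
next
  case (Cons a P)
  obtain Q' where Q: "Q = a # Q'"
    using Cons.prems(2,3) by (cases Q) (auto simp: is_path_def)
  have dP: "distinct (a # P)" and dQ: "distinct (a # Q')"
    using Cons.prems(1,2) Q by (auto simp: is_path_def)
  consider "P = []" "Q' = []" | "P = []" "Q' \<noteq> []" | "P \<noteq> []" "Q' = []" | "P \<noteq> []" "Q' \<noteq> []"
    by blast
  then show ?case
  proof cases
    case 4
    then have "last P \<in> set P \<inter> set Q'" using Cons.prems(4) Q by (metis IntI last_ConsR last_in_set)
    then have "hd P = hd Q'"
      using acyclic_paths_disjoint[OF assms Cons.prems(1) Cons.prems(2)[unfolded Q]] 4 by blast
    then show ?thesis
      using Cons.IH[OF is_path_tl[OF Cons.prems(1)] is_path_tl] Cons.prems Q 4 by simp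
  qed (use Cons.prems(4) Q dP dQ in auto)
qed

section \<open>Rooted trees\<close>

lemma two_less_degree:
  assumes "finite V" and "simple_graph V E"
    and "{w, a} \<in> E" and "{w, b} \<in> E" and "{w, c} \<in> E" and "a \<noteq> b" and "a \<noteq> c" and "b \<noteq> c"
  shows "2 < degree E w"
proof -
  have "{x. {w, x} \<in> E} \<subseteq> V"
    using assms(2) unfolding simple_graph_def by (auto simp: doubleton_eq_iff)
  then have "finite {x. {w, x} \<in> E}" using assms(1) by (rule finite_subset)
  moreover have "{a, b, c} \<subseteq> {x. {w, x} \<in> E}" using assms(3-5) by auto
  ultimately have "card {a, b, c} \<le> degree E w" unfolding degree_def by (rule card_mono)
  then show ?thesis using assms(6-8) by simp
qed

locale rooted_tree =
  fixes V :: "'a set" and TE :: "'a set set" and r :: 'a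
  assumes finite_V: "finite V" and tree: "is_tree V TE" and root: "r \<in> V"
begin

abbreviation tree_below :: "'a \<Rightarrow> 'a \<Rightarrow> bool" (infix "\<preceq>" 50)
  where "y \<preceq> x \<equiv> tree_le V TE r y x"

definition root_path :: "'a \<Rightarrow> 'a list" where
  "root_path x = (THE P. is_path V TE P \<and> hd P = r \<and> last P = x)"

definition depth :: "'a \<Rightarrow> nat" where
  "depth x = length (root_path x) - 1"

lemma root_path_eq: "is_path V TE P \<Longrightarrow> hd P = r \<Longrightarrow> root_path (last P) = P"
  unfolding root_path_def
  using acyclic_path_unique[of V TE] tree unfolding is_tree_def by (intro the_equality) auto

lemma root_path:
  assumes "x \<in> V"
  shows "is_path V TE (root_path x)" and "hd (root_path x) = r" and "last (root_path x) = x"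
proof -
  obtain P where "is_path V TE P" "hd P = r" "last P = x"
    using tree root assms unfolding is_tree_def connected_graph_def by blast
  then show "is_path V TE (root_path x)" "hd (root_path x) = r" "last (root_path x) = x"
    using root_path_eq by auto
qed

lemma length_root_path: "x \<in> V \<Longrightarrow> length (root_path x) = Suc (depth x)"
  using root_path(1) unfolding depth_def is_path_def by (cases "root_path x") auto

lemma root_path_nth:
  assumes "is_path V TE P" and "hd P = r" and "i < length P"
  shows "root_path (P ! i) = take (Suc i) P"
proof -
  have "last (take (Suc i) P) = P ! i" using assms(3) by (simp add: take_Suc_conv_app_nth)
  moreover have "hd (take (Suc i) P) = r" using assms(2,3) by (cases P) auto
  moreover have "root_path (last (take (Suc i) P)) = take (Suc i) P"
    using root_path_eq[OF is_path_take[OF assms(1)]] \<open>hd (take (Suc i) P) = r\<close> by simp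
  ultimately show ?thesis by simp
qed

lemma tree_le_iff: "y \<preceq> x \<longleftrightarrow> x \<in> V \<and> y \<in> set (root_path x)"
proof
  assume "y \<preceq> x"
  then obtain P where P: "is_path V TE P" "hd P = r" "last P = x" "y \<in> set P"
    unfolding tree_le_def by blast
  then have "x \<in> V" unfolding is_path_def by auto
  moreover have "root_path x = P" using root_path_eq[OF P(1,2)] P(3) by simp
  ultimately show "x \<in> V \<and> y \<in> set (root_path x)" using P(4) by simp
next
  assume "x \<in> V \<and> y \<in> set (root_path x)"
  then show "y \<preceq> x" unfolding tree_le_def using root_path by blast
qed

lemma tree_le_in_V: "y \<preceq> x \<Longrightarrow> y \<in> V \<and> x \<in> V"
  unfolding tree_le_iff using root_path(1) unfolding is_path_def by blast

lemma tree_le_root_path: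
  assumes "y \<preceq> x"
  shows "root_path y = take (Suc (depth y)) (root_path x)"
    and "root_path x ! depth y = y" and "depth y \<le> depth x"
proof -
  have x: "x \<in> V" and "y \<in> set (root_path x)" using assms tree_le_iff by auto
  then obtain k where k: "k < length (root_path x)" "root_path x ! k = y"
    by (auto simp: in_set_conv_nth)
  have "root_path y = take (Suc k) (root_path x)"
    using root_path_nth[OF root_path(1,2)[OF x] k(1)] k(2) by simp
  moreover from this have "depth y = k" unfolding depth_def using k(1) by simp
  ultimately show "root_path y = take (Suc (depth y)) (root_path x)"
    and "root_path x ! depth y = y" and "depth y \<le> depth x"
    using k length_root_path[OF x] by auto
qed

lemma nth_root_path_tree_le:
  assumes "x \<in> V" and "i \<le> depth x"
  shows "root_path x ! i \<preceq> x" and "depth (root_path x ! i) = i"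
proof -
  have i: "i < length (root_path x)" using assms length_root_path by simp
  then show "root_path x ! i \<preceq> x" using assms(1) tree_le_iff by simp
  have "root_path (root_path x ! i) = take (Suc i) (root_path x)"
    using root_path_nth[OF root_path(1,2)[OF assms(1)] i] .
  then show "depth (root_path x ! i) = i" unfolding depth_def using i by simp
qed

lemma tree_le_refl: "x \<in> V \<Longrightarrow> x \<preceq> x"
  unfolding tree_le_iff using root_path(1,3)[of x] last_in_set unfolding is_path_def by fastforce

lemma root_tree_le: "x \<in> V \<Longrightarrow> r \<preceq> x"
  unfolding tree_le_iff using root_path(1,2)[of x] hd_in_set unfolding is_path_def by fastforce

lemma tree_le_trans: "z \<preceq> y \<Longrightarrow> y \<preceq> x \<Longrightarrow> z \<preceq> x"
  using tree_le_root_path(1)[of y x] tree_le_iff in_set_takeD by fastforce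

lemma tree_le_depth_eq:
  assumes "y \<preceq> x" and "depth y = depth x"
  shows "y = x"
proof -
  have "y = root_path x ! depth x" using tree_le_root_path(2)[OF assms(1)] assms(2) by simp
  also have "\<dots> = x" using tree_le_root_path(2)[OF tree_le_refl] tree_le_in_V[OF assms(1)] by blast
  finally show ?thesis .
qed

lemma tree_le_depth_less: "y \<preceq> x \<Longrightarrow> y \<noteq> x \<Longrightarrow> depth y < depth x"
  using tree_le_root_path(3) tree_le_depth_eq by fastforce

lemma tree_le_linear:
  assumes "y \<preceq> x" and "z \<preceq> x" and "depth y \<le> depth z"
  shows "y \<preceq> z"
proof -
  have "y = root_path x ! depth y" and "depth y < Suc (depth z)"
    using tree_le_root_path(2)[OF assms(1)] assms(3) by auto
  moreover have "depth y < length (root_path x)"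
    using tree_le_root_path(3)[OF assms(1)] length_root_path tree_le_in_V[OF assms(1)] by simp
  ultimately have "y \<in> set (take (Suc (depth z)) (root_path x))"
    by (simp add: in_set_conv_nth) (metis length_take min_less_iff_conj nth_take)
  then show ?thesis
    unfolding tree_le_iff using tree_le_root_path(1)[OF assms(2)] tree_le_in_V[OF assms(2)] by simp
qed

lemma depth_eq_0_iff:
  assumes "x \<in> V"
  shows "depth x = 0 \<longleftrightarrow> x = r"
proof
  assume "depth x = 0"
  then have "x = root_path x ! 0" using tree_le_root_path(2)[OF tree_le_refl[OF assms]] by simp
  also have "\<dots> = r" using root_path(1,2)[OF assms] by (simp add: hd_conv_nth is_path_def)
  finally show "x = r" .
next
  assume "x = r"
  have "root_path r = [r]" using root_path_eq[of "[r]"] root by (simp add: is_path_def)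
  then show "depth x = 0" using \<open>x = r\<close> by (simp add: depth_def)
qed

lemma depth_less_card:
  assumes "x \<in> V"
  shows "depth x < card V"
proof -
  have "distinct (root_path x)" and "set (root_path x) \<subseteq> V"
    using root_path(1)[OF assms] unfolding is_path_def by auto
  then have "length (root_path x) \<le> card V" using finite_V card_mono distinct_card by metis
  then show ?thesis using length_root_path[OF assms] by simp
qed

lemma deepest_common_lower_bound:
  assumes "t \<preceq> x" and "t \<preceq> y"
  obtains w where "t \<preceq> w" and "w \<preceq> x" and "w \<preceq> y"
    and "\<And>z. z \<preceq> x \<Longrightarrow> z \<preceq> y \<Longrightarrow> depth z \<le> depth w"
proof -
  define C where "C = {z. z \<preceq> x \<and> z \<preceq> y}"
  have "finite C" unfolding C_def using finite_V tree_le_in_V by (auto intro: finite_subset)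
  moreover have "t \<in> C" unfolding C_def using assms by blast
  ultimately obtain w where "w \<in> C" and w_max: "depth w = Max (depth ` C)"
    using Max_in[of "depth ` C"] by fastforce
  have w_deepest: "depth z \<le> depth w" if "z \<in> C" for z
    using Max_ge[of "depth ` C"] \<open>finite C\<close> that w_max by simp
  have "w \<preceq> x" and "w \<preceq> y" using \<open>w \<in> C\<close> unfolding C_def by auto
  moreover have "t \<preceq> w" using tree_le_linear[OF assms(1) \<open>w \<preceq> x\<close>] w_deepest \<open>t \<in> C\<close> by blast
  ultimately show ?thesis using that w_deepest unfolding C_def by blast
qed

lemma two_less_degree_at_meet:
  assumes "\<not> x \<preceq> y" and "\<not> y \<preceq> x" and wx: "w \<preceq> x" and wy: "w \<preceq> y" and "w \<noteq> r"
    and w_deepest: "\<And>z. z \<preceq> x \<Longrightarrow> z \<preceq> y \<Longrightarrow> depth z \<le> depth w"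
  shows "2 < degree TE w"
proof -
  define k where "k = depth w"
  define p q where "p = root_path x" and "q = root_path y"
  have xV: "x \<in> V" and yV: "y \<in> V" using wx wy tree_le_in_V by auto
  have "k \<noteq> 0" using depth_eq_0_iff \<open>w \<noteq> r\<close> tree_le_in_V[OF wx] unfolding k_def by blast
  have "w \<noteq> x" and "w \<noteq> y" using wx wy assms(1,2) by auto
  then have "k < depth x" and "k < depth y"
    using tree_le_depth_less wx wy unfolding k_def by auto
  then have len: "Suc k < length p" "Suc k < length q"
    using length_root_path xV yV unfolding p_def q_def by auto
  have pk: "p ! k = w" and qk: "q ! k = w"
    using tree_le_root_path(2) wx wy unfolding p_def q_def k_def by auto
  have parent: "p ! (k - 1) = q ! (k - 1)"
  proof -
    have "take (Suc k) p = take (Suc k) q"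
      using tree_le_root_path(1)[OF wx] tree_le_root_path(1)[OF wy] unfolding p_def q_def k_def by simp
    then have "take (Suc k) p ! (k - 1) = take (Suc k) q ! (k - 1)" by simp
    then show ?thesis by simp
  qed
  have children: "p ! Suc k \<noteq> q ! Suc k"
  proof
    assume eq: "p ! Suc k = q ! Suc k"
    have "p ! Suc k \<preceq> x" "depth (p ! Suc k) = Suc k"
      using nth_root_path_tree_le[OF xV] \<open>k < depth x\<close> unfolding p_def by auto
    moreover have "p ! Suc k \<preceq> y"
      using nth_root_path_tree_le[OF yV] \<open>k < depth y\<close> eq unfolding q_def by auto
    ultimately show False using w_deepest[of "p ! Suc k"] unfolding k_def by simp
  qed
  have edges: "{P ! i, P ! Suc i} \<in> TE" if "is_path V TE P" "Suc i < length P" for P i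
    using that unfolding is_path_def by blast
  have "{w, p ! (k - 1)} \<in> TE"
    using edges[OF root_path(1)[OF xV], of "k - 1"] len \<open>k \<noteq> 0\<close> pk
    unfolding p_def by (simp add: insert_commute)
  moreover have "{w, p ! Suc k} \<in> TE" and "{w, q ! Suc k} \<in> TE"
    using edges[OF root_path(1)[OF xV], of k] edges[OF root_path(1)[OF yV], of k] len pk qk
    unfolding p_def q_def by auto
  moreover have "p ! (k - 1) \<noteq> p ! Suc k" and "p ! (k - 1) \<noteq> q ! Suc k"
    using root_path(1)[OF xV] root_path(1)[OF yV] len parent unfolding p_def q_def is_path_def
    by (auto simp: nth_eq_iff_index_eq)
  moreover have "simple_graph V TE" using tree unfolding is_tree_def by blast
  ultimately show ?thesis using two_less_degree[OF finite_V] children by blast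
qed

lemma branching_vertex_between:
  assumes "\<not> x \<preceq> y" and "\<not> y \<preceq> x" and "t \<preceq> x" and "t \<preceq> y" and "t \<noteq> r"
  obtains w where "t \<preceq> w" and "w \<preceq> x" and "w \<preceq> y" and "2 < degree TE w"
proof -
  obtain w where tw: "t \<preceq> w" and "w \<preceq> x" "w \<preceq> y"
    and "\<And>z. z \<preceq> x \<Longrightarrow> z \<preceq> y \<Longrightarrow> depth z \<le> depth w"
    using deepest_common_lower_bound[OF assms(3,4)] by blast
  moreover have "w \<noteq> r"
  proof
    assume "w = r"
    then have "depth t = 0" using tree_le_root_path(3)[OF tw] depth_eq_0_iff[OF root] by simp
    then show False using depth_eq_0_iff tree_le_in_V[OF tw] assms(5) by blast
  qed
  ultimately show ?thesis using that two_less_degree_at_meet[OF assms(1,2)] by blast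
qed

lemma inj_on_depth:
  assumes "\<And>x y. x \<in> A \<Longrightarrow> y \<in> A \<Longrightarrow> x \<preceq> y \<or> y \<preceq> x"
  shows "inj_on depth A"
  using assms tree_le_depth_eq by (intro inj_onI) fastforce

end

section \<open>Normal trees with a single branching vertex\<close>

text \<open>The vertex \<^const>\<open>None\<close> stands for the set \<open>C\<close> contracted to a single vertex.\<close>

definition contract_adj :: "'a set set \<Rightarrow> 'a set \<Rightarrow> 'a option \<Rightarrow> 'a option \<Rightarrow> bool" where
  "contract_adj E C a b \<longleftrightarrow> (case (a, b) of
      (Some x, Some y) \<Rightarrow> {x, y} \<in> E
    | (Some x, None) \<Rightarrow> (\<exists>c\<in>C. {x, c} \<in> E)
    | (None, Some y) \<Rightarrow> (\<exists>c\<in>C. {y, c} \<in> E)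
    | (None, None) \<Rightarrow> False)"

lemma contract_adj_simps [simp]:
  "contract_adj E C (Some x) (Some y) \<longleftrightarrow> {x, y} \<in> E"
  "contract_adj E C (Some x) None \<longleftrightarrow> (\<exists>c\<in>C. {x, c} \<in> E)"
  "contract_adj E C None (Some y) \<longleftrightarrow> (\<exists>c\<in>C. {y, c} \<in> E)"
  "\<not> contract_adj E C None None"
  unfolding contract_adj_def by simp_all

lemma irreflp_contract_adj: "simple_graph V E \<Longrightarrow> irreflp (contract_adj E C)"
  unfolding simple_graph_def irreflp_on_def
  by (metis contract_adj_simps(1,4) doubleton_eq_iff insert_absorb2 not_None_eq)

lemma symp_contract_adj: "symp (contract_adj E C)"
  unfolding symp_def contract_adj_def by (auto simp: insert_commute split: option.splits)

locale star0_normal_tree = rooted_tree +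
  fixes E :: "'a set set"
  assumes simple: "simple_graph V E"
    and normal: "normal_tree V E TE r"
    and no_secant: "\<not> (\<exists>e\<in>E. \<exists>e'\<in>E. secant V TE r e e')"
    and star0: "star0_like V TE"
begin

lemma edge_in_V: "{x, y} \<in> E \<Longrightarrow> x \<in> V \<and> y \<in> V"
  using simple unfolding simple_graph_def by (auto simp: doubleton_eq_iff)

lemma edge_comparable: "{x, y} \<in> E \<Longrightarrow> x \<preceq> y \<or> y \<preceq> x"
  using normal unfolding normal_tree_def by blast

lemma no_crossing_below:
  assumes "a \<preceq> z" and "b \<preceq> z" and "c \<preceq> z" and "d \<preceq> z"
    and "depth a < depth b" and "depth b < depth c" and "depth c < depth d"
    and "{a, c} \<in> E" and "{b, d} \<in> E"
  shows False
proof -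
  let ?P = "root_path z"
  have "secant V TE r {a, c} {b, d}"
    unfolding secant_def
  proof (rule exI[of _ ?P], rule exI[of _ "depth a"], rule exI[of _ "depth c"],
      rule exI[of _ "depth b"], rule exI[of _ "depth d"], intro conjI)
    have "z \<in> V" using assms(1) tree_le_in_V by blast
    then show "is_path V TE ?P" and "hd ?P = r" using root_path by auto
    show "depth c < length ?P" and "depth d < length ?P"
      using assms(3,4) tree_le_root_path(3) length_root_path \<open>z \<in> V\<close> by (auto simp: less_Suc_eq_le)
    show "{a, c} = {?P ! depth a, ?P ! depth c}" and "{b, d} = {?P ! depth b, ?P ! depth d}"
      using assms(1-4) tree_le_root_path(2) by auto
  qed (use assms(5-7) in auto)
  then show False using no_secant assms(8,9) by blast
qed

definition centre :: 'a where
  "centre = (THE v. v \<in> V \<and> 2 < degree TE v)"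

lemma centre_in_V: "centre \<in> V" and centre_unique: "v \<in> V \<Longrightarrow> 2 < degree TE v \<Longrightarrow> v = centre"
  using theI'[OF star0[unfolded star0_like_def]] star0 unfolding star0_like_def centre_def by blast+

definition spine :: "'a set" where
  "spine = {x. x \<preceq> centre}"

lemma spine_subset: "spine \<subseteq> V"
  unfolding spine_def using tree_le_in_V by blast

lemma incomparable_above_centre:
  assumes "\<not> x \<preceq> y" and "\<not> y \<preceq> x" and "t \<preceq> x" and "t \<preceq> y" and "t \<noteq> r"
  shows "t \<in> spine" and "centre \<preceq> x"
proof -
  obtain w where "t \<preceq> w" "w \<preceq> x" "w \<preceq> y" "2 < degree TE w"
    using branching_vertex_between[OF assms] .
  moreover from this have "w = centre" using centre_unique tree_le_in_V by blast
  ultimately show "t \<in> spine" and "centre \<preceq> x" unfolding spine_def by auto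
qed

lemma spine_le_outside:
  assumes "s \<in> spine" and "u \<in> V - spine" and "{s, u} \<in> E"
  shows "s \<preceq> u"
  using edge_comparable[OF assms(3)] assms(1,2) tree_le_trans unfolding spine_def by blast

lemma centre_le_outside:
  assumes "s \<in> spine" and "s \<noteq> r" and "s \<preceq> u" and "u \<in> V - spine"
  shows "centre \<preceq> u"
proof (rule ccontr)
  assume "\<not> centre \<preceq> u"
  moreover have "\<not> u \<preceq> centre" using assms(4) unfolding spine_def by blast
  ultimately show False
    using incomparable_above_centre(2)[of u centre s] assms(1-3) unfolding spine_def by blast
qed

definition branch :: "'a \<Rightarrow> 'a" where
  "branch u = hd (filter (\<lambda>x. x \<notin> spine) (root_path u))"

lemma branch_tree_le_notin_spine:
  assumes "u \<in> V - spine"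
  shows "branch u \<preceq> u" and "branch u \<notin> spine"
proof -
  have "u \<in> set (filter (\<lambda>x. x \<notin> spine) (root_path u))"
    using assms tree_le_refl tree_le_iff by auto
  then have "branch u \<in> set (filter (\<lambda>x. x \<notin> spine) (root_path u))"
    unfolding branch_def by (metis empty_iff hd_in_set list.set(1))
  then show "branch u \<preceq> u" and "branch u \<notin> spine" using assms tree_le_iff by auto
qed

lemma branch_eq:
  assumes "u \<in> V - spine" and "u \<preceq> u'"
  shows "branch u' = branch u"
proof -
  obtain ys where "root_path u' = root_path u @ ys"
    using tree_le_root_path(1)[OF assms(2)] by (metis append_take_drop_id)
  moreover have "filter (\<lambda>x. x \<notin> spine) (root_path u) \<noteq> []"
    using assms(1) tree_le_refl tree_le_iff by (auto simp: filter_empty_conv)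
  ultimately show ?thesis unfolding branch_def by simp
qed

lemma same_branch_comparable:
  assumes "u \<in> V - spine" and "u' \<in> V - spine" and "branch u = branch u'"
  shows "u \<preceq> u' \<or> u' \<preceq> u"
proof (rule ccontr)
  assume "\<not> (u \<preceq> u' \<or> u' \<preceq> u)"
  moreover have "branch u \<noteq> r"
    using branch_tree_le_notin_spine(2)[OF assms(1)] root_tree_le[OF centre_in_V] unfolding spine_def by auto
  ultimately have "branch u \<in> spine"
    using incomparable_above_centre(1) branch_tree_le_notin_spine(1) assms by metis
  then show False using branch_tree_le_notin_spine(2)[OF assms(1)] by blast
qed

lemma same_branch_le:
  assumes "u \<in> V - spine" and "u' \<in> V - spine" and "branch u = branch u'" and "depth u \<le> depth u'"
  shows "u \<preceq> u'"
  using same_branch_comparable[OF assms(1-3)] assms(4) tree_le_depth_eq tree_le_root_path(3)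
  by (metis le_antisym)

lemma edge_same_branch: "u \<in> V - spine \<Longrightarrow> w \<in> V - spine \<Longrightarrow> {u, w} \<in> E \<Longrightarrow> branch u = branch w"
  using edge_comparable branch_eq by metis

text \<open>
  The contracted vertex comes after the whole spine because the outside neighbours of a spine
  vertex other than \<open>r\<close> lie above the centre.
\<close>

lemma crossing_free_spine:
  "crossing_free (insert None (Some ` spine)) (case_option (card V) depth) (contract_adj E (V - spine))"
  unfolding crossing_free_def
proof (intro ballI impI notI)
  let ?pos = "case_option (card V) depth"
  fix a b c d assume X: "a \<in> insert None (Some ` spine)" "b \<in> insert None (Some ` spine)"
    "c \<in> insert None (Some ` spine)" "d \<in> insert None (Some ` spine)"
    and ab: "?pos a < ?pos b" and bc: "?pos b < ?pos c" and cd: "?pos c < ?pos d"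
    and edges: "contract_adj E (V - spine) a c \<and> contract_adj E (V - spine) b d"
  have bounded: "?pos z \<le> card V" if "z \<in> insert None (Some ` spine)" for z
    using that depth_less_card spine_subset by (auto simp: less_imp_le)
  obtain a' b' c' where abc: "a = Some a'" "b = Some b'" "c = Some c'"
    and spine: "a' \<in> spine" "b' \<in> spine" "c' \<in> spine"
    using X ab bc cd bounded[OF X(4)] by auto
  have depths: "depth a' < depth b'" "depth b' < depth c'" using ab bc abc by auto
  have ac: "{a', c'} \<in> E" using edges abc by simp
  show False
  proof (cases d)
    case None
    then obtain u where u: "u \<in> V - spine" and bu: "{b', u} \<in> E" using edges abc by auto
    have "b' \<noteq> r" using depths depth_eq_0_iff[OF root] by auto
    then have "centre \<preceq> u" using centre_le_outside spine_le_outside spine(2) u bu by blast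
    then have below_u: "x \<preceq> u" if "x \<in> spine" for x
      using that tree_le_trans unfolding spine_def by blast
    have "c' \<noteq> u" using spine u by blast
    then have "depth c' < depth u" using tree_le_depth_less below_u spine by blast
    then show False
      using no_crossing_below[OF below_u below_u below_u tree_le_refl] spine u depths ac bu by blast
  next
    case (Some d')
    then have "d' \<in> spine" and "depth c' < depth d'" and "{b', d'} \<in> E"
      using X(4) cd edges abc by auto
    then show False
      using no_crossing_below[of a' centre b' c' d'] spine depths ac unfolding spine_def by blast
  qed
qed

text \<open>Here the contracted spine comes first, since spine neighbours lie below a branch.\<close>

lemma crossing_free_branch:
  "crossing_free (insert None (Some ` {u \<in> V - spine. branch u = v}))
     (case_option 0 (Suc \<circ> depth)) (contract_adj E spine)"
  unfolding crossing_free_def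
proof (intro ballI impI notI)
  let ?B = "{u \<in> V - spine. branch u = v}" and ?pos = "case_option 0 (Suc \<circ> depth)"
  fix a b c d assume X: "a \<in> insert None (Some ` ?B)" "b \<in> insert None (Some ` ?B)"
    "c \<in> insert None (Some ` ?B)" "d \<in> insert None (Some ` ?B)"
    and ab: "?pos a < ?pos b" and bc: "?pos b < ?pos c" and cd: "?pos c < ?pos d"
    and edges: "contract_adj E spine a c \<and> contract_adj E spine b d"
  obtain b' c' d' where bcd: "b = Some b'" "c = Some c'" "d = Some d'"
    and in_B: "b' \<in> ?B" "c' \<in> ?B" "d' \<in> ?B"
    using X ab bc cd by auto
  have depths: "depth b' < depth c'" "depth c' < depth d'" using bc cd bcd by auto
  have bd: "{b', d'} \<in> E" using edges bcd by simp
  have below_d: "x \<preceq> d'" if "x \<in> ?B" "depth x \<le> depth d'" for x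
    using same_branch_le that in_B(3) by auto
  show False
  proof (cases a)
    case None
    then obtain s where s: "s \<in> spine" and cs: "{c', s} \<in> E" using edges bcd by auto
    have "s \<preceq> c'" using spine_le_outside[OF s] cs in_B(2) by (simp add: insert_commute)
    then have sd: "s \<preceq> d'" using tree_le_trans below_d in_B(2) depths by simp
    have "depth s < depth b'"
    proof (rule ccontr)
      assume "\<not> depth s < depth b'"
      then have "b' \<preceq> s" using tree_le_linear[OF below_d[OF in_B(1)] sd] depths by simp
      then have "b' \<in> spine" using s tree_le_trans unfolding spine_def by blast
      then show False using in_B(1) by blast
    qed
    then show False
      using no_crossing_below[OF sd below_d below_d tree_le_refl] in_B depths cs bd
      by (auto simp: insert_commute)
  next
    case (Some a')
    then have "a' \<in> ?B" and "depth a' < depth b'" and "{a', c'} \<in> E"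
      using X(1) ab edges bcd by auto
    then show False
      using no_crossing_below[OF below_d below_d below_d tree_le_refl] in_B depths bd by auto
  qed
qed

lemma spine_colouring:
  "\<exists>col. proper_colouring (insert None (Some ` spine)) (contract_adj E (V - spine)) 3 col
     \<and> (\<forall>s\<in>spine. \<forall>u\<in>V - spine. {s, u} \<in> E \<longrightarrow> col (Some s) < 2)"
proof -
  have "inj_on depth spine"
  proof (rule inj_on_depth)
    fix x y assume "x \<in> spine" "y \<in> spine"
    then show "x \<preceq> y \<or> y \<preceq> x"
      using tree_le_linear[of x centre y] tree_le_linear[of y centre x] nat_le_linear[of "depth x" "depth y"]
      unfolding spine_def by auto
  qed
  then have "inj_on (case_option (card V) depth) (insert None (Some ` spine))"
    using depth_less_card spine_subset by (force simp: inj_on_insert comp_def intro!: inj_on_imageI)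
  moreover have "finite (insert None (Some ` spine))"
    using spine_subset finite_V by (auto intro: finite_subset)
  ultimately obtain col where "proper_colouring (insert None (Some ` spine)) (contract_adj E (V - spine)) 3 col"
    using crossing_free_3_colouring[OF _ _ irreflp_contract_adj[OF simple] symp_contract_adj
        crossing_free_spine] by blast
  then have "\<exists>col'. proper_colouring (insert None (Some ` spine)) (contract_adj E (V - spine)) 3 col'
      \<and> col' None = 2"
    by (rule proper_colouring_recolour) auto
  then obtain col where col: "proper_colouring (insert None (Some ` spine)) (contract_adj E (V - spine)) 3 col"
    and "col None = 2"
    by blast
  moreover have "col (Some s) < 2" if "s \<in> spine" "u \<in> V - spine" "{s, u} \<in> E" for s u
  proof -
    have "contract_adj E (V - spine) (Some s) None" using that by auto
    then have "col (Some s) \<noteq> col None" using proper_colouringD(2)[OF col] that(1) by blast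
    then show ?thesis using proper_colouringD(1)[OF col, of "Some s"] \<open>col None = 2\<close> that(1) by auto
  qed
  ultimately show ?thesis by blast
qed

lemma branch_colouring:
  "\<exists>col. proper_colouring (insert None (Some ` {u \<in> V - spine. branch u = v})) (contract_adj E spine) 3 col
     \<and> (\<forall>u\<in>V - spine. \<forall>s\<in>spine. {s, u} \<in> E \<longrightarrow> branch u = v \<longrightarrow> col (Some u) \<noteq> 0)"
proof -
  have "inj_on depth {u \<in> V - spine. branch u = v}"
    by (rule inj_on_depth) (use same_branch_comparable in auto)
  then have "inj_on (case_option 0 (Suc \<circ> depth)) (insert None (Some ` {u \<in> V - spine. branch u = v}))"
    by (auto simp: inj_on_insert comp_def inj_on_def intro!: inj_on_imageI)
  moreover have "finite (insert None (Some ` {u \<in> V - spine. branch u = v}))"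
    using finite_V by simp
  ultimately obtain col
    where "proper_colouring (insert None (Some ` {u \<in> V - spine. branch u = v})) (contract_adj E spine) 3 col"
    using crossing_free_3_colouring[OF _ _ irreflp_contract_adj[OF simple] symp_contract_adj
        crossing_free_branch] by blast
  then have "\<exists>col'. proper_colouring (insert None (Some ` {u \<in> V - spine. branch u = v}))
      (contract_adj E spine) 3 col' \<and> col' None = 0"
    by (rule proper_colouring_recolour) auto
  then obtain col
    where col: "proper_colouring (insert None (Some ` {u \<in> V - spine. branch u = v})) (contract_adj E spine) 3 col"
    and "col None = 0"
    by blast
  moreover have "col (Some u) \<noteq> 0" if "u \<in> V - spine" "s \<in> spine" "{s, u} \<in> E" "branch u = v" for s u
    using proper_colouringD(2)[OF col, of None "Some u"] \<open>col None = 0\<close> that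
    by (auto simp: insert_commute)
  ultimately show ?thesis by blast
qed

lemma colourable_4: "colourable V E 4"
proof -
  obtain c0 where c0: "proper_colouring (insert None (Some ` spine)) (contract_adj E (V - spine)) 3 c0"
    and c0_boundary: "\<And>s u. s \<in> spine \<Longrightarrow> u \<in> V - spine \<Longrightarrow> {s, u} \<in> E \<Longrightarrow> c0 (Some s) < 2"
    using spine_colouring by blast
  obtain cb where cb: "\<And>v. proper_colouring (insert None (Some ` {u \<in> V - spine. branch u = v}))
      (contract_adj E spine) 3 (cb v)"
    and cb_boundary: "\<And>s u. u \<in> V - spine \<Longrightarrow> s \<in> spine \<Longrightarrow> {s, u} \<in> E \<Longrightarrow> cb (branch u) (Some u) \<noteq> 0"
  proof -
    have "\<exists>cb. \<forall>v. proper_colouring (insert None (Some ` {u \<in> V - spine. branch u = v}))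
        (contract_adj E spine) 3 (cb v)
      \<and> (\<forall>u\<in>V - spine. \<forall>s\<in>spine. {s, u} \<in> E \<longrightarrow> branch u = v \<longrightarrow> cb v (Some u) \<noteq> 0)"
      by (rule choice) (rule allI, rule branch_colouring)
    then show ?thesis using that by blast
  qed
  define col where "col x = (if x \<in> spine then c0 (Some x) else Suc (cb (branch x) (Some x)))" for x
  have "col x < 4" if "x \<in> V" for x
    using proper_colouringD(1)[OF c0, of "Some x"] proper_colouringD(1)[OF cb[of "branch x"], of "Some x"] that
    unfolding col_def by auto
  moreover have "col x \<noteq> col y" if "{x, y} \<in> E" for x y
  proof -
    have "x \<in> V" "y \<in> V" using edge_in_V that by auto
    then consider "x \<in> spine" "y \<in> spine" | "x \<in> spine" "y \<in> V - spine" | "x \<in> V - spine" "y \<in> spine"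
      | "x \<in> V - spine" "y \<in> V - spine"
      by blast
    then show ?thesis
    proof cases
      case 1
      then show ?thesis using proper_colouringD(2)[OF c0, of "Some x" "Some y"] that unfolding col_def by auto
    next
      case 2
      then show ?thesis using c0_boundary[of x y] cb_boundary[of y x] that unfolding col_def by auto
    next
      case 3
      then show ?thesis using c0_boundary[of y x] cb_boundary[of x y] that unfolding col_def
        by (auto simp: insert_commute)
    next
      case 4
      then have "branch x = branch y" using edge_same_branch that by blast
      then show ?thesis
        using proper_colouringD(2)[OF cb[of "branch x"], of "Some x" "Some y"] 4 that unfolding col_def by auto
    qed
  qed
  ultimately show ?thesis unfolding colourable_def by blast
qed

end

theorem proposition5:
  fixes V :: "'a set" and E TE :: "'a set set" and r :: 'a
  assumes "finite V"
    and "simple_graph V E"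
    and "r \<in> V"
    and "spanning_tree V E TE"
    and "normal_tree V E TE r"
    and "\<not> (\<exists>e\<in>E. \<exists>e'\<in>E. secant V TE r e e')"
    and "star0_like V TE"
  shows "colourable V E 4"
proof -
  interpret star0_normal_tree V TE r E
    using assms unfolding spanning_tree_def by unfold_locales auto
  show ?thesis by (rule colourable_4)
qed

end
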